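(* For each $d\ge1$ let $B$ be a random $d\times d$ matrix with independent entries $B_{ij}\in\{0,1\}$, $\mathbb P(B_{ij}=1)=1/d$. For a positive integer $k$, let $P(k)$ be the set of set partitions of $\{1,\dots,k\}$, and let $S_k=\{(1,1),(2,1),(2,2),(3,2),\dots,(k,k),(1,k)\}$, i.e. the pairs $(t,t)$ and $(t+1,t)$ for $t=1,\dots,k$ with indices taken mod $k$ (so $k+1\equiv1$). For a pair $p_i,p_j\in P(k)$ let $p_{ij}$ be the partition of $S_k$ in which $(a_1,b_1)$ and $(a_2,b_2)$ lie in the same block if and only if $a_1,a_2$ lie in the same block of $p_i$ and $b_1,b_2$ lie in the same block of $p_j$. Writing $|p|$ for the number of blocks of a partition $p$, the $k$-th moment of the limiting averaged spectral distribution of $BB^t$, $$m_k=\lim_{d\to\infty}\frac1d\,\mathbb E_B\operatorname{tr}\big[(BB^t)^k\big],$$ equals the number of pairs $(p_i,p_j)\in P(k)\times P(k)$ with $|p_i|+|p_j|-|p_{ij}|=1$.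
   Context: $B$ is called a Bernoulli random matrix with parameter $p=1/d$; the eigenvalues of $BB^t$ are the squared singular values of $B$. *)

theory Defs
  imports "HOL-Probability.Probability" "HOL-Library.Disjoint_Sets" "Jordan_Normal_Form.Matrix"
begin

definition mat_trace :: "'a::comm_ring_1 mat \<Rightarrow> 'a" where
  "mat_trace A = (\<Sum>i<dim_row A. A $$ (i, i))"

text \<open>Bernoulli random d x d 0/1 matrix with parameter 1/d: the law of the entry pattern,
  as a pmf on functions {..<d} x {..<d} -> bool (independent Bernoulli(1/d) entries).\<close>
definition bernoulli_matrix_pmf :: "nat \<Rightarrow> (nat \<times> nat \<Rightarrow> bool) pmf" where
  "bernoulli_matrix_pmf d = Pi_pmf ({..<d} \<times> {..<d}) False (\<lambda>_. bernoulli_pmf (1 / real d))"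

definition to_matrix :: "nat \<Rightarrow> (nat \<times> nat \<Rightarrow> bool) \<Rightarrow> real mat" where
  "to_matrix d M = mat d d (\<lambda>ij. if M ij then 1 else 0)"

definition set_partitions :: "nat \<Rightarrow> nat set set set" where
  "set_partitions k = {P. partition_on {1..k} P}"

definition S_set :: "nat \<Rightarrow> (nat \<times> nat) set" where
  "S_set k = {(t, t) | t. t \<in> {1..k}} \<union> {(t mod k + 1, t) | t. t \<in> {1..k}}"

definition same_block :: "'a set set \<Rightarrow> 'a \<Rightarrow> 'a \<Rightarrow> bool" where
  "same_block P a b \<longleftrightarrow> (\<exists>B\<in>P. a \<in> B \<and> b \<in> B)"

definition joint_partition :: "nat \<Rightarrow> nat set set \<Rightarrow> nat set set \<Rightarrow> (nat \<times> nat) set set" where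
  "joint_partition k p1 p2 =
     S_set k // {(x, y). x \<in> S_set k \<and> y \<in> S_set k \<and>
                   same_block p1 (fst x) (fst y) \<and> same_block p2 (snd x) (snd y)}"

end

theory Submission
  imports Defs
begin

text \<open>
  Expanding the trace, \<open>E tr (B B\<^sup>T)\<^sup>k\<close> is a sum over pairs of index maps
  \<open>g, h : {1..k} \<rightarrow> {..<d}\<close> of \<open>d\<^sup>-\<^sup>e\<close>, where \<open>e\<close> is the number of distinct entries
  \<open>(g a, h b)\<close>, \<open>(a, b) \<in> S\<^sub>k\<close>, met by the closed walk.  Grouping the maps by their
  kernel partitions \<open>p\<^sub>1\<close>, \<open>p\<^sub>2\<close> of \<open>{1..k}\<close>, \<open>e\<close> becomes \<open>|p\<^sub>1\<^sub>2|\<close> and exactly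
  \<open>d (d - 1) \<cdots> (d - |p| + 1)\<close> maps have kernel \<open>p\<close>, so the normalised moment is
  \<open>\<Sum> d\<^bsup>|p\<^sub>1| + |p\<^sub>2| - |p\<^sub>1\<^sub>2| - 1\<^esup> (1 + o(1))\<close>.  The exponent is never positive: the
  entries are the edges of a bipartite graph on the \<open>|p\<^sub>1| + |p\<^sub>2|\<close> distinct row and
  column indices, and the walk \<open>g 1, h 1, g 2, h 2, \<dots>, h k\<close> traverses all of it, so it is
  connected and has at most one vertex more than it has edges.  Hence exactly the pairs with
  \<open>|p\<^sub>1| + |p\<^sub>2| - |p\<^sub>1\<^sub>2| = 1\<close> survive in the limit, each contributing \<open>1\<close>.
\<close>

section \<open>Kernel partitions\<close>

definition kernel_partition :: "'a set \<Rightarrow> ('a \<Rightarrow> 'b) \<Rightarrow> 'a set set" where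
  "kernel_partition A f = A // {(x, y). x \<in> A \<and> y \<in> A \<and> f x = f y}"

lemma kernel_partition_eq_image: "kernel_partition A f = (\<lambda>x. {y \<in> A. f y = f x}) ` A"
  unfolding kernel_partition_def quotient_def UNION_singleton_eq_range by (intro image_cong) auto

lemma partition_on_kernel_partition: "partition_on A (kernel_partition A f)"
  unfolding kernel_partition_def
  by (rule partition_on_quotient, rule equivI) (auto simp: refl_on_def sym_def trans_def)

lemma card_kernel_partition: "card (kernel_partition A f) = card (f ` A)"
proof -
  have "kernel_partition A f = (\<lambda>b. {y \<in> A. f y = b}) ` f ` A"
    unfolding kernel_partition_eq_image by (simp add: image_image)
  moreover have "inj_on (\<lambda>b. {y \<in> A. f y = b}) (f ` A)"
  proof (rule inj_onI)
    fix b b' assume "b \<in> f ` A" and eq: "{y \<in> A. f y = b} = {y \<in> A. f y = b'}"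
    then obtain a where "a \<in> A" "f a = b" by blast
    then have "a \<in> {y \<in> A. f y = b'}" using eq by blast
    then show "b = b'" using \<open>f a = b\<close> by simp
  qed
  ultimately show ?thesis by (simp add: card_image)
qed

lemma same_block_kernel_partition:
  "same_block (kernel_partition A f) x y \<longleftrightarrow> x \<in> A \<and> y \<in> A \<and> f x = f y"
  unfolding same_block_def kernel_partition_eq_image by auto

lemma kernel_partition_eq_iff:
  assumes "partition_on A P"
  shows "kernel_partition A f = P \<longleftrightarrow> (\<forall>x\<in>A. \<forall>y\<in>A. f x = f y \<longleftrightarrow> same_block P x y)"
proof
  assume "kernel_partition A f = P"
  then show "\<forall>x\<in>A. \<forall>y\<in>A. f x = f y \<longleftrightarrow> same_block P x y"
    using same_block_kernel_partition[of A f] by blast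
next
  assume same: "\<forall>x\<in>A. \<forall>y\<in>A. f x = f y \<longleftrightarrow> same_block P x y"
  have "{(x, y). x \<in> A \<and> y \<in> A \<and> f x = f y} = {(x, y). \<exists>B\<in>P. x \<in> B \<and> y \<in> B}"
    using same partition_onD1[OF assms] by (auto simp: same_block_def)
  then show "kernel_partition A f = P"
    unfolding kernel_partition_def using partition_on_eq_quotient[OF assms] by simp
qed

definition part_block :: "'a set set \<Rightarrow> 'a \<Rightarrow> 'a set" where
  "part_block P x = (THE B. B \<in> P \<and> x \<in> B)"

lemma part_block_eq:
  assumes "partition_on A P" "B \<in> P" "x \<in> B"
  shows "part_block P x = B"
  unfolding part_block_def
  using assms by (intro the_equality) (auto simp: partition_on_def disjoint_def)

lemma part_block_mem:
  assumes "partition_on A P" "x \<in> A"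
  shows "part_block P x \<in> P" "x \<in> part_block P x"
proof -
  obtain B where "B \<in> P" "x \<in> B" using assms partition_onD1 by blast
  then show "part_block P x \<in> P" "x \<in> part_block P x"
    using part_block_eq[OF assms(1)] by auto
qed

lemma kernel_partition_eq_iff_part_block:
  assumes "partition_on A P"
  shows "kernel_partition A f = P \<longleftrightarrow> (\<forall>x\<in>A. \<forall>y\<in>A. f x = f y \<longleftrightarrow> part_block P x = part_block P y)"
proof -
  have "same_block P x y \<longleftrightarrow> part_block P x = part_block P y" if "x \<in> A" "y \<in> A" for x y
    using part_block_mem[OF assms] part_block_eq[OF assms] that unfolding same_block_def by metis
  then show ?thesis
    unfolding kernel_partition_eq_iff[OF assms] by auto
qed

lemma inj_on_restrict_comp_part_block:
  assumes "partition_on A P"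
  shows "inj_on (\<lambda>g. restrict (g \<circ> part_block P) A) (P \<rightarrow>\<^sub>E D)"
proof (rule inj_onI)
  fix g1 g2 assume g: "g1 \<in> P \<rightarrow>\<^sub>E D" "g2 \<in> P \<rightarrow>\<^sub>E D"
    and eq: "restrict (g1 \<circ> part_block P) A = restrict (g2 \<circ> part_block P) A"
  show "g1 = g2"
  proof (rule extensionalityI[of _ P])
    fix B assume "B \<in> P"
    then have "B \<noteq> {}" "B \<subseteq> A" using assms by (auto simp: partition_on_def)
    then obtain x where "x \<in> B" "x \<in> A" by blast
    then show "g1 B = g2 B"
      using fun_cong[OF eq, of x] part_block_eq[OF assms \<open>B \<in> P\<close>] by simp
  qed (use g in \<open>auto simp: PiE_iff\<close>)
qed

lemma kernel_partition_factors_through_part_block: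
  assumes P: "partition_on A P" and f: "f \<in> A \<rightarrow>\<^sub>E D" "kernel_partition A f = P"
  obtains g where "g \<in> P \<rightarrow>\<^sub>E D" "inj_on g P" "f = restrict (g \<circ> part_block P) A"
proof
  define rep where "rep B = (SOME x. x \<in> B)" for B :: "'a set"
  have rep: "rep B \<in> A" "part_block P (rep B) = B" if "B \<in> P" for B
    using P that some_in_eq[of B] part_block_eq[OF P that] unfolding rep_def
    by (auto simp: partition_on_def)
  have f_eq: "f x = f y \<longleftrightarrow> part_block P x = part_block P y" if "x \<in> A" "y \<in> A" for x y
    using f(2) that unfolding kernel_partition_eq_iff_part_block[OF P] by blast
  show "restrict (f \<circ> rep) P \<in> P \<rightarrow>\<^sub>E D"
    using f(1) rep(1) by auto
  show "inj_on (restrict (f \<circ> rep) P) P"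
    using f_eq rep by (intro inj_onI) (metis comp_apply restrict_apply')
  show "f = restrict (restrict (f \<circ> rep) P \<circ> part_block P) A"
  proof (rule extensionalityI[of _ A])
    show "f \<in> extensional A" using f(1) by (simp add: PiE_iff)
    fix x assume "x \<in> A"
    then have B: "part_block P x \<in> P" using part_block_mem[OF P] by blast
    then show "f x = restrict (restrict (f \<circ> rep) P \<circ> part_block P) A x"
      using f_eq[OF rep(1)[OF B] \<open>x \<in> A\<close>] rep(2)[OF B] \<open>x \<in> A\<close> by simp
  qed simp
qed

lemma card_kernel_partition_fibre:
  assumes P: "partition_on A P"
  shows "card {f \<in> A \<rightarrow>\<^sub>E D. kernel_partition A f = P} = card {g \<in> P \<rightarrow>\<^sub>E D. inj_on g P}"
proof -
  let ?lift = "\<lambda>g. restrict (g \<circ> part_block P) A"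
  have image: "?lift ` {g \<in> P \<rightarrow>\<^sub>E D. inj_on g P} = {f \<in> A \<rightarrow>\<^sub>E D. kernel_partition A f = P}"
  proof (intro equalityI subsetI)
    fix f assume "f \<in> ?lift ` {g \<in> P \<rightarrow>\<^sub>E D. inj_on g P}"
    then obtain g where g: "g \<in> P \<rightarrow>\<^sub>E D" "inj_on g P" and f: "f = ?lift g" by blast
    have "f \<in> A \<rightarrow>\<^sub>E D"
      using g part_block_mem(1)[OF P] unfolding f by auto
    moreover have "kernel_partition A f = P"
      unfolding kernel_partition_eq_iff_part_block[OF P] f
      using inj_on_eq_iff[OF g(2)] part_block_mem(1)[OF P] by simp
    ultimately show "f \<in> {f \<in> A \<rightarrow>\<^sub>E D. kernel_partition A f = P}" by blast
  next
    fix f assume "f \<in> {f \<in> A \<rightarrow>\<^sub>E D. kernel_partition A f = P}"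
    then show "f \<in> ?lift ` {g \<in> P \<rightarrow>\<^sub>E D. inj_on g P}"
      using kernel_partition_factors_through_part_block[OF P] by blast
  qed
  have "inj_on ?lift {g \<in> P \<rightarrow>\<^sub>E D. inj_on g P}"
    using inj_on_restrict_comp_part_block[OF P] by (rule inj_on_subset) blast
  from card_image[OF this] show ?thesis
    unfolding image .
qed

lemma card_kernel_partition_fibre_lessThan:
  assumes "finite A" "partition_on A P"
  shows "card {f \<in> A \<rightarrow>\<^sub>E {..<d}. kernel_partition A f = P} = (\<Prod>m = 0..<card P. d - m)"
  unfolding card_kernel_partition_fibre[OF assms(2)]
  using card_inj_on_subset_funcset[of P "{..<d}" P] finite_elements[OF assms] by simp

lemma ex_kernel_partition:
  assumes "finite A" "partition_on A P"
  obtains f :: "'a \<Rightarrow> nat" where "kernel_partition A f = P"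
proof -
  have "card {f \<in> A \<rightarrow>\<^sub>E {..<card P}. kernel_partition A f = P} > 0"
    unfolding card_kernel_partition_fibre_lessThan[OF assms] by (rule prod_pos) auto
  then show ?thesis using that by (auto simp: card_gt_0_iff)
qed

section \<open>Closed walks through \<open>S_set k\<close>\<close>

lemma S_set_subset: "S_set k \<subseteq> {1..k} \<times> {1..k}"
proof -
  have "t mod k + 1 \<le> k" if "t \<in> {1..k}" for t
  proof -
    have "t mod k < k" using that by (intro mod_less_divisor) auto
    then show ?thesis by linarith
  qed
  then show ?thesis unfolding S_set_def by auto
qed

lemma finite_S_set: "finite (S_set k)"
  using finite_subset[OF S_set_subset] by blast

lemma card_walk_vertices_le:
  fixes v :: "nat \<Rightarrow> 'a"
  shows "card (v ` {..m}) \<le> card ((\<lambda>s. {v s, v (Suc s)}) ` {..<m}) + 1"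
proof (induction m)
  case 0
  then show ?case by simp
next
  case (Suc m)
  let ?edge = "\<lambda>s. {v s, v (Suc s)}"
  have vertices: "v ` {..Suc m} = insert (v (Suc m)) (v ` {..m})"
    by (auto simp: atMost_Suc)
  have edges: "?edge ` {..<Suc m} = insert (?edge m) (?edge ` {..<m})"
    by (auto simp: lessThan_Suc)
  show ?case
  proof (cases "v (Suc m) \<in> v ` {..m}")
    case True
    have "card (?edge ` {..<m}) \<le> card (?edge ` {..<Suc m})"
      unfolding edges by (intro card_mono) auto
    then show ?thesis using Suc.IH True by (simp add: vertices insert_absorb)
  next
    case False
    have "\<Union> (?edge ` {..<m}) \<subseteq> v ` {..m}" by auto
    then have "?edge m \<notin> ?edge ` {..<m}" using False by blast
    then show ?thesis using Suc.IH False by (simp add: vertices edges)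
  qed
qed

text \<open>The walk \<open>i 1, j 1, i 2, j 2, \<dots>, i k, j k\<close> in the bipartite graph whose edges are the
  pairs \<open>map_prod i j ` S_set k\<close>, with row indices tagged \<open>Inl\<close> and column indices \<open>Inr\<close>.\<close>

definition zigzag_walk :: "(nat \<Rightarrow> 'a) \<Rightarrow> (nat \<Rightarrow> 'b) \<Rightarrow> nat \<Rightarrow> 'a + 'b" where
  "zigzag_walk i j s = (if even s then Inl (i (s div 2 + 1)) else Inr (j (s div 2 + 1)))"

lemma zigzag_walk_vertices:
  assumes "k \<ge> 1"
  shows "zigzag_walk i j ` {..2 * k - 1} = Inl ` i ` {1..k} \<union> Inr ` j ` {1..k}"
proof (intro equalityI subsetI)
  fix x assume "x \<in> zigzag_walk i j ` {..2 * k - 1}"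
  then obtain s where "s \<le> 2 * k - 1" "x = zigzag_walk i j s" by auto
  moreover have "s div 2 + 1 \<in> {1..k}" using \<open>s \<le> 2 * k - 1\<close> assms by auto
  ultimately show "x \<in> Inl ` i ` {1..k} \<union> Inr ` j ` {1..k}"
    unfolding zigzag_walk_def by auto
next
  fix x assume "x \<in> Inl ` i ` {1..k} \<union> Inr ` j ` {1..k}"
  then obtain t where t: "t \<in> {1..k}" "x = Inl (i t) \<or> x = Inr (j t)" by auto
  then have "x = zigzag_walk i j (2 * (t - 1)) \<or> x = zigzag_walk i j (2 * (t - 1) + 1)"
    "2 * (t - 1) \<le> 2 * k - 1" "2 * (t - 1) + 1 \<le> 2 * k - 1"
    unfolding zigzag_walk_def by auto
  then show "x \<in> zigzag_walk i j ` {..2 * k - 1}" by auto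
qed

lemma zigzag_walk_edge:
  assumes "s < 2 * k - 1"
  shows "{zigzag_walk i j s, zigzag_walk i j (Suc s)} \<in> (\<lambda>(a, b). {Inl a, Inr b}) ` map_prod i j ` S_set k"
proof -
  define t where "t = s div 2 + 1"
  have t: "t \<in> {1..k}" using assms unfolding t_def by auto
  show ?thesis
  proof (cases "even s")
    case True
    then have "{zigzag_walk i j s, zigzag_walk i j (Suc s)} = {Inl (i t), Inr (j t)}" and "(t, t) \<in> S_set k"
      using t unfolding zigzag_walk_def t_def S_set_def by auto
    then show ?thesis by force
  next
    case False
    then have "t < k" using assms unfolding t_def by presburger
    then have "{zigzag_walk i j s, zigzag_walk i j (Suc s)} = {Inl (i (t mod k + 1)), Inr (j t)}"
      and "(t mod k + 1, t) \<in> S_set k"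
      using t False unfolding zigzag_walk_def t_def S_set_def by (auto simp: insert_commute)
    then show ?thesis by force
  qed
qed

lemma card_image_add_card_image_le_card_S_set:
  fixes i :: "nat \<Rightarrow> 'a" and j :: "nat \<Rightarrow> 'b"
  assumes "k \<ge> 1"
  shows "card (i ` {1..k}) + card (j ` {1..k}) \<le> card (map_prod i j ` S_set k) + 1"
proof -
  let ?v = "zigzag_walk i j" and ?m = "2 * k - 1"
  have "card (?v ` {..?m}) = card (i ` {1..k}) + card (j ` {1..k})"
    unfolding zigzag_walk_vertices[OF assms] by (subst card_Un_disjoint) (auto simp: card_image)
  moreover have "card ((\<lambda>s. {?v s, ?v (Suc s)}) ` {..<?m})
      \<le> card ((\<lambda>(a, b). {Inl a, Inr b}) ` map_prod i j ` S_set k)"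
    using zigzag_walk_edge by (intro card_mono) (auto simp: finite_S_set)
  moreover have "\<dots> \<le> card (map_prod i j ` S_set k)"
    by (intro card_image_le) (simp add: finite_S_set)
  ultimately show ?thesis
    using card_walk_vertices_le[of ?v ?m] by linarith
qed

lemma joint_partition_kernel_partitions:
  "joint_partition k (kernel_partition {1..k} i) (kernel_partition {1..k} j)
     = kernel_partition (S_set k) (map_prod i j)"
proof -
  have same_blocks_iff: "same_block (kernel_partition {1..k} i) (fst x) (fst y) \<and>
        same_block (kernel_partition {1..k} j) (snd x) (snd y) \<longleftrightarrow> map_prod i j x = map_prod i j y"
    if "x \<in> S_set k" "y \<in> S_set k" for x y
  proof -
    obtain a b c e where ab: "x = (a, b)" and ce: "y = (c, e)" by (cases x, cases y)
    then have "a \<in> {1..k}" "b \<in> {1..k}" "c \<in> {1..k}" "e \<in> {1..k}"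
      using subsetD[OF S_set_subset that(1)] subsetD[OF S_set_subset that(2)] by auto
    then show ?thesis unfolding ab ce by (simp add: same_block_kernel_partition)
  qed
  have "{(x, y). x \<in> S_set k \<and> y \<in> S_set k \<and> same_block (kernel_partition {1..k} i) (fst x) (fst y) \<and>
          same_block (kernel_partition {1..k} j) (snd x) (snd y)}
      = {(x, y). x \<in> S_set k \<and> y \<in> S_set k \<and> map_prod i j x = map_prod i j y}"
    using same_blocks_iff by blast
  then show ?thesis
    unfolding joint_partition_def kernel_partition_def by simp
qed

lemma card_partitions_le_card_joint_partition:
  assumes "k \<ge> 1" "p1 \<in> set_partitions k" "p2 \<in> set_partitions k"
  shows "card p1 + card p2 \<le> card (joint_partition k p1 p2) + 1"
proof -
  obtain i :: "nat \<Rightarrow> nat" where i: "kernel_partition {1..k} i = p1"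
    using ex_kernel_partition assms(2) unfolding set_partitions_def by blast
  obtain j :: "nat \<Rightarrow> nat" where j: "kernel_partition {1..k} j = p2"
    using ex_kernel_partition assms(3) unfolding set_partitions_def by blast
  show ?thesis
    using card_image_add_card_image_le_card_S_set[OF assms(1), of i j]
    unfolding i[symmetric] j[symmetric] joint_partition_kernel_partitions card_kernel_partition .
qed

section \<open>Traces of matrix powers\<close>

lemma index_mult_mat_sum:
  fixes A B :: "'a::semiring_0 mat"
  assumes "A \<in> carrier_mat m n" "B \<in> carrier_mat n p" "a < m" "b < p"
  shows "(A * B) $$ (a, b) = (\<Sum>c<n. A $$ (a, c) * B $$ (c, b))"
  using assms by (simp add: scalar_prod_def lessThan_atLeast0)

lemma sum_walks_Suc:
  assumes "n \<ge> 1"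
  shows "(\<Sum>g \<in> {g \<in> {1..Suc n} \<rightarrow>\<^sub>E D. g 1 = a}. F g)
       = (\<Sum>(c, g) \<in> D \<times> {g \<in> {1..n} \<rightarrow>\<^sub>E D. g 1 = a}. F (g(Suc n := c)))"
proof (rule sum.reindex_bij_witness[where j = "\<lambda>g. (g (Suc n), g(Suc n := undefined))"
      and i = "\<lambda>(c, g). g(Suc n := c)"])
  fix g assume "g \<in> {g \<in> {1..Suc n} \<rightarrow>\<^sub>E D. g 1 = a}"
  then show "(g (Suc n), g(Suc n := undefined)) \<in> D \<times> {g \<in> {1..n} \<rightarrow>\<^sub>E D. g 1 = a}"
    using assms by (auto simp: PiE_def extensional_def)
qed (use assms in \<open>auto simp: PiE_def extensional_def fun_eq_iff\<close>)

lemma index_pow_mat_eq_sum_walks: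
  fixes C :: "'a::comm_semiring_1 mat"
  assumes C: "C \<in> carrier_mat d d" and "a < d" and "n \<ge> 1"
  shows "b < d \<Longrightarrow> (C ^\<^sub>m n) $$ (a, b) =
    (\<Sum>g \<in> {g \<in> {1..n} \<rightarrow>\<^sub>E {..<d}. g 1 = a}. \<Prod>t\<in>{1..n}. C $$ (g t, (g(n + 1 := b)) (t + 1)))"
  using \<open>n \<ge> 1\<close>
proof (induction n arbitrary: b rule: nat_induct_at_least)
  case base
  have one: "{1..1::nat} = {1}" by simp
  have walks: "{g \<in> {1} \<rightarrow>\<^sub>E {..<d}. g 1 = a} = {restrict (\<lambda>_. a) {1}}"
    using \<open>a < d\<close> by (auto simp: PiE_def extensional_def fun_eq_iff)
  show ?case unfolding one walks using C \<open>a < d\<close> base by simp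
next
  case (Suc n)
  let ?W = "{g \<in> {1..n} \<rightarrow>\<^sub>E {..<d}. g 1 = a}"
  have "(C ^\<^sub>m Suc n) $$ (a, b) = (\<Sum>c<d. (C ^\<^sub>m n) $$ (a, c) * C $$ (c, b))"
    using index_mult_mat_sum[OF pow_carrier_mat[OF C] C \<open>a < d\<close> Suc.prems] by simp
  also have "\<dots> = (\<Sum>(c, g) \<in> {..<d} \<times> ?W.
      (\<Prod>t\<in>{1..n}. C $$ (g t, (g(Suc n := c)) (t + 1))) * C $$ (c, b))"
    using Suc.IH by (simp add: sum_distrib_right sum.cartesian_product)
  also have "\<dots> = (\<Sum>(c, g) \<in> {..<d} \<times> ?W.
      \<Prod>t\<in>{1..Suc n}. C $$ ((g(Suc n := c)) t, (g(Suc n := c, Suc (Suc n) := b)) (t + 1)))"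
  proof (intro sum.cong refl, clarify)
    fix c g
    have "(\<Prod>t\<in>{1..n}. C $$ ((g(Suc n := c)) t, (g(Suc n := c, Suc (Suc n) := b)) (t + 1)))
        = (\<Prod>t\<in>{1..n}. C $$ (g t, (g(Suc n := c)) (t + 1)))"
      by (rule prod.cong) auto
    then show "(\<Prod>t\<in>{1..n}. C $$ (g t, (g(Suc n := c)) (t + 1))) * C $$ (c, b)
        = (\<Prod>t\<in>{1..Suc n}. C $$ ((g(Suc n := c)) t, (g(Suc n := c, Suc (Suc n) := b)) (t + 1)))"
      using \<open>n \<ge> 1\<close> by (simp add: atLeastAtMostSuc_conv mult.commute)
  qed
  also have "\<dots> = (\<Sum>g \<in> {g \<in> {1..Suc n} \<rightarrow>\<^sub>E {..<d}. g 1 = a}.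
      \<Prod>t\<in>{1..Suc n}. C $$ (g t, (g(Suc (Suc n) := b)) (t + 1)))"
    by (rule sum_walks_Suc[OF \<open>n \<ge> 1\<close>, symmetric])
  finally show ?case by simp
qed

lemma mat_trace_pow_eq_sum_closed_walks:
  fixes C :: "'a::comm_ring_1 mat"
  assumes C: "C \<in> carrier_mat d d" and "k \<ge> 1"
  shows "mat_trace (C ^\<^sub>m k) = (\<Sum>g \<in> {1..k} \<rightarrow>\<^sub>E {..<d}. \<Prod>t\<in>{1..k}. C $$ (g t, g (t mod k + 1)))"
proof -
  let ?W = "\<lambda>a. {g \<in> {1..k} \<rightarrow>\<^sub>E {..<d}. g 1 = a}"
  have "mat_trace (C ^\<^sub>m k) = (\<Sum>a<d. (C ^\<^sub>m k) $$ (a, a))"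
    using C by (simp add: mat_trace_def)
  also have "\<dots> = (\<Sum>a<d. \<Sum>g \<in> ?W a. \<Prod>t\<in>{1..k}. C $$ (g t, g (t mod k + 1)))"
  proof (rule sum.cong[OF refl])
    fix a assume "a \<in> {..<d}"
    then have "(C ^\<^sub>m k) $$ (a, a) = (\<Sum>g \<in> ?W a. \<Prod>t\<in>{1..k}. C $$ (g t, (g(k + 1 := a)) (t + 1)))"
      using index_pow_mat_eq_sum_walks[OF C _ \<open>k \<ge> 1\<close>] by simp
    also have "\<dots> = (\<Sum>g \<in> ?W a. \<Prod>t\<in>{1..k}. C $$ (g t, g (t mod k + 1)))"
    proof (intro sum.cong prod.cong refl)
      fix g t assume "g \<in> ?W a" "t \<in> {1..k}"
      then show "C $$ (g t, (g(k + 1 := a)) (t + 1)) = C $$ (g t, g (t mod k + 1))"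
        by (cases "t = k") auto
    qed
    finally show "(C ^\<^sub>m k) $$ (a, a) = \<dots>" .
  qed
  also have "\<dots> = (\<Sum>g \<in> {1..k} \<rightarrow>\<^sub>E {..<d}. \<Prod>t\<in>{1..k}. C $$ (g t, g (t mod k + 1)))"
    using \<open>k \<ge> 1\<close> by (intro sum.group) (auto simp: finite_PiE)
  finally show ?thesis .
qed

lemma mat_trace_pow_mult_transpose:
  fixes A :: "'a::comm_ring_1 mat"
  assumes A: "A \<in> carrier_mat d d" and "k \<ge> 1"
  shows "mat_trace ((A * A\<^sup>T) ^\<^sub>m k) = (\<Sum>g \<in> {1..k} \<rightarrow>\<^sub>E {..<d}. \<Sum>h \<in> {1..k} \<rightarrow>\<^sub>E {..<d}.
      \<Prod>t\<in>{1..k}. A $$ (g t, h t) * A $$ (g (t mod k + 1), h t))"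
proof -
  have AT: "A\<^sup>T \<in> carrier_mat d d" using A by simp
  have entry: "(A * A\<^sup>T) $$ (x, y) = (\<Sum>z<d. A $$ (x, z) * A $$ (y, z))" if "x < d" "y < d" for x y
    using index_mult_mat_sum[OF A AT that] A that by simp
  have successor: "t mod k + 1 \<in> {1..k}" for t
    using \<open>k \<ge> 1\<close> by (simp add: Suc_leI)
  show ?thesis
    unfolding mat_trace_pow_eq_sum_closed_walks[OF mult_carrier_mat[OF A AT] \<open>k \<ge> 1\<close>]
  proof (rule sum.cong[OF refl])
    fix g assume g: "g \<in> {1..k} \<rightarrow>\<^sub>E {..<d}"
    have "(\<Prod>t\<in>{1..k}. (A * A\<^sup>T) $$ (g t, g (t mod k + 1)))
        = (\<Prod>t\<in>{1..k}. \<Sum>z<d. A $$ (g t, z) * A $$ (g (t mod k + 1), z))"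
      using g successor by (intro prod.cong refl entry) auto
    also have "\<dots> = (\<Sum>h \<in> {1..k} \<rightarrow>\<^sub>E {..<d}. \<Prod>t\<in>{1..k}. A $$ (g t, h t) * A $$ (g (t mod k + 1), h t))"
      by (rule prod_sum_PiE) auto
    finally show "(\<Prod>t\<in>{1..k}. (A * A\<^sup>T) $$ (g t, g (t mod k + 1))) = \<dots>" .
  qed
qed

section \<open>The expected trace\<close>

lemma prob_Pi_bernoulli_all_true:
  assumes "finite I" "E \<subseteq> I" "0 \<le> p" "p \<le> 1"
  shows "measure_pmf.prob (Pi_pmf I dflt (\<lambda>_. bernoulli_pmf p)) {M. \<forall>e\<in>E. M e} = p ^ card E"
proof -
  have "{M. \<forall>e\<in>E. M e} = Pi I (\<lambda>e. if e \<in> E then {True} else UNIV)"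
    using assms(2) by (auto simp: Pi_def)
  then have "measure_pmf.prob (Pi_pmf I dflt (\<lambda>_. bernoulli_pmf p)) {M. \<forall>e\<in>E. M e}
      = (\<Prod>e\<in>I. measure_pmf.prob (bernoulli_pmf p) (if e \<in> E then {True} else UNIV))"
    by (simp add: measure_Pi_pmf_Pi assms(1))
  also have "\<dots> = (\<Prod>e\<in>I. if e \<in> E then p else 1)"
    using assms(3,4) by (intro prod.cong refl) (simp add: measure_pmf_single)
  also have "\<dots> = p ^ card E"
    using assms(1,2) by (simp add: prod.If_cases Int_absorb1)
  finally show ?thesis .
qed

lemma expectation_closed_walk_entries:
  assumes "g \<in> {1..k} \<rightarrow>\<^sub>E {..<d}" "h \<in> {1..k} \<rightarrow>\<^sub>E {..<d}"
  shows "measure_pmf.expectation (bernoulli_matrix_pmf d)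
          (\<lambda>M. \<Prod>t\<in>{1..k}. to_matrix d M $$ (g t, h t) * to_matrix d M $$ (g (t mod k + 1), h t))
       = (1 / real d) ^ card (map_prod g h ` S_set k)"
proof -
  let ?E = "map_prod g h ` S_set k"
  have entries: "?E = (\<Union>t\<in>{1..k}. {(g t, h t), (g (t mod k + 1), h t)})"
    unfolding S_set_def by auto
  have E_sub: "?E \<subseteq> {..<d} \<times> {..<d}"
    using S_set_subset assms by fastforce
  have "(\<Prod>t\<in>{1..k}. to_matrix d M $$ (g t, h t) * to_matrix d M $$ (g (t mod k + 1), h t))
      = indicator {M. \<forall>e\<in>?E. M e} M" for M
  proof -
    have in_range: "g t < d" "h t < d" "g (t mod k + 1) < d" if "t \<in> {1..k}" for t
    proof -
      have "t mod k < k" using that by (intro mod_less_divisor) auto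
      then have "t mod k + 1 \<in> {1..k}" by simp
      then show "g t < d" "h t < d" "g (t mod k + 1) < d"
        using PiE_mem[OF assms(1) that] PiE_mem[OF assms(2) that] PiE_mem[OF assms(1)] by auto
    qed
    then have "(\<Prod>t\<in>{1..k}. to_matrix d M $$ (g t, h t) * to_matrix d M $$ (g (t mod k + 1), h t))
        = (\<Prod>t\<in>{1..k}. if M (g t, h t) \<and> M (g (t mod k + 1), h t) then 1 else 0)"
      by (intro prod.cong refl) (simp add: to_matrix_def)
    also have "\<dots> = indicator {M. \<forall>e\<in>?E. M e} M"
      unfolding entries by (auto simp: indicator_def)
    finally show ?thesis .
  qed
  then have "measure_pmf.expectation (bernoulli_matrix_pmf d)
          (\<lambda>M. \<Prod>t\<in>{1..k}. to_matrix d M $$ (g t, h t) * to_matrix d M $$ (g (t mod k + 1), h t))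
      = measure_pmf.prob (bernoulli_matrix_pmf d) {M. \<forall>e\<in>?E. M e}"
    by simp
  also have "\<dots> = (1 / real d) ^ card ?E"
    unfolding bernoulli_matrix_pmf_def using E_sub
    by (intro prob_Pi_bernoulli_all_true) (auto simp: divide_le_eq_1)
  finally show ?thesis .
qed

lemma expectation_trace_pow_eq_sum_walks:
  assumes "k \<ge> 1"
  shows "measure_pmf.expectation (bernoulli_matrix_pmf d)
           (\<lambda>M. mat_trace ((to_matrix d M * (to_matrix d M)\<^sup>T) ^\<^sub>m k))
       = (\<Sum>g \<in> {1..k} \<rightarrow>\<^sub>E {..<d}. \<Sum>h \<in> {1..k} \<rightarrow>\<^sub>E {..<d}. (1 / real d) ^ card (map_prod g h ` S_set k))"
proof -
  have carrier: "to_matrix d M \<in> carrier_mat d d" for M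
    unfolding to_matrix_def by simp
  have "finite (set_pmf (bernoulli_matrix_pmf d))"
    unfolding bernoulli_matrix_pmf_def by (subst set_Pi_pmf) auto
  note integrable = integrable_measure_pmf_finite[OF this]
  have "measure_pmf.expectation (bernoulli_matrix_pmf d)
           (\<lambda>M. mat_trace ((to_matrix d M * (to_matrix d M)\<^sup>T) ^\<^sub>m k))
      = measure_pmf.expectation (bernoulli_matrix_pmf d) (\<lambda>M.
          \<Sum>g \<in> {1..k} \<rightarrow>\<^sub>E {..<d}. \<Sum>h \<in> {1..k} \<rightarrow>\<^sub>E {..<d}.
            \<Prod>t\<in>{1..k}. to_matrix d M $$ (g t, h t) * to_matrix d M $$ (g (t mod k + 1), h t))"
    by (simp only: mat_trace_pow_mult_transpose[OF carrier assms])
  also have "\<dots> = (\<Sum>g \<in> {1..k} \<rightarrow>\<^sub>E {..<d}. \<Sum>h \<in> {1..k} \<rightarrow>\<^sub>E {..<d}.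
      measure_pmf.expectation (bernoulli_matrix_pmf d) (\<lambda>M.
        \<Prod>t\<in>{1..k}. to_matrix d M $$ (g t, h t) * to_matrix d M $$ (g (t mod k + 1), h t)))"
    by (simp add: Bochner_Integration.integral_sum integrable)
  also have "\<dots> = (\<Sum>g \<in> {1..k} \<rightarrow>\<^sub>E {..<d}. \<Sum>h \<in> {1..k} \<rightarrow>\<^sub>E {..<d}. (1 / real d) ^ card (map_prod g h ` S_set k))"
    by (intro sum.cong refl expectation_closed_walk_entries)
  finally show ?thesis .
qed

lemma sum_sum_fun_comp:
  fixes F :: "'b \<Rightarrow> 'b \<Rightarrow> 'c::comm_semiring_1"
  assumes "finite S" "finite R" "g ` S \<subseteq> R"
  shows "(\<Sum>x\<in>S. \<Sum>y\<in>S. F (g x) (g y))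
       = (\<Sum>u\<in>R. \<Sum>v\<in>R. of_nat (card {x \<in> S. g x = u}) * of_nat (card {y \<in> S. g y = v}) * F u v)"
proof -
  have "(\<Sum>x\<in>S. \<Sum>y\<in>S. F (g x) (g y)) = (\<Sum>x\<in>S. \<Sum>v\<in>R. of_nat (card {y \<in> S. g y = v}) * F (g x) v)"
    by (intro sum.cong refl sum_fun_comp assms)
  also have "\<dots> = (\<Sum>v\<in>R. of_nat (card {y \<in> S. g y = v}) * (\<Sum>x\<in>S. F (g x) v))"
    by (subst sum.swap) (simp add: sum_distrib_left)
  also have "\<dots> = (\<Sum>v\<in>R. of_nat (card {y \<in> S. g y = v}) * (\<Sum>u\<in>R. of_nat (card {x \<in> S. g x = u}) * F u v))"
    by (intro sum.cong refl arg_cong2[where f = "(*)"] sum_fun_comp assms)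
  also have "\<dots> = (\<Sum>v\<in>R. \<Sum>u\<in>R. of_nat (card {x \<in> S. g x = u}) * of_nat (card {y \<in> S. g y = v}) * F u v)"
    by (simp add: sum_distrib_left mult_ac)
  also have "\<dots> = (\<Sum>u\<in>R. \<Sum>v\<in>R. of_nat (card {x \<in> S. g x = u}) * of_nat (card {y \<in> S. g y = v}) * F u v)"
    by (rule sum.swap)
  finally show ?thesis .
qed

lemma expectation_trace_pow_eq_sum_partitions:
  assumes "k \<ge> 1"
  shows "measure_pmf.expectation (bernoulli_matrix_pmf d)
           (\<lambda>M. mat_trace ((to_matrix d M * (to_matrix d M)\<^sup>T) ^\<^sub>m k))
       = (\<Sum>p1 \<in> set_partitions k. \<Sum>p2 \<in> set_partitions k.
            real (\<Prod>m = 0..<card p1. d - m) * real (\<Prod>m = 0..<card p2. d - m) *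
            (1 / real d) ^ card (joint_partition k p1 p2))"
proof -
  let ?W = "{1..k} \<rightarrow>\<^sub>E {..<d}" and ?P = "set_partitions k"
  let ?ker = "kernel_partition {1..k}"
  have fibre: "card {g \<in> ?W. ?ker g = p} = (\<Prod>m = 0..<card p. d - m)" if "p \<in> ?P" for p
    using that unfolding set_partitions_def by (intro card_kernel_partition_fibre_lessThan) auto
  have "(\<Sum>g \<in> ?W. \<Sum>h \<in> ?W. (1 / real d) ^ card (map_prod g h ` S_set k))
      = (\<Sum>g \<in> ?W. \<Sum>h \<in> ?W. (1 / real d) ^ card (joint_partition k (?ker g) (?ker h)))"
    by (simp only: joint_partition_kernel_partitions card_kernel_partition)
  also have "\<dots> = (\<Sum>p1 \<in> ?P. \<Sum>p2 \<in> ?P. real (card {g \<in> ?W. ?ker g = p1}) *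
      real (card {h \<in> ?W. ?ker h = p2}) * (1 / real d) ^ card (joint_partition k p1 p2))"
    unfolding set_partitions_def
    by (intro sum_sum_fun_comp) (auto simp: finite_PiE finitely_many_partition_on partition_on_kernel_partition)
  also have "\<dots> = (\<Sum>p1 \<in> ?P. \<Sum>p2 \<in> ?P. real (\<Prod>m = 0..<card p1. d - m) *
      real (\<Prod>m = 0..<card p2. d - m) * (1 / real d) ^ card (joint_partition k p1 p2))"
    by (intro sum.cong refl) (simp only: fibre)
  finally show ?thesis
    unfolding expectation_trace_pow_eq_sum_walks[OF assms] .
qed

section \<open>The limit\<close>

lemma tendsto_falling_factorial_over_power:
  "(\<lambda>d. real (\<Prod>m = 0..<a. d - m) / real d ^ a) \<longlonglongrightarrow> 1"
proof -
  have "(\<lambda>d. \<Prod>m = 0..<a. 1 - real m / real d) \<longlonglongrightarrow> (\<Prod>m = 0..<a. 1 - 0)"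
    by (intro tendsto_prod tendsto_diff tendsto_const lim_const_over_n)
  moreover have "\<forall>\<^sub>F d in sequentially. (\<Prod>m = 0..<a. 1 - real m / real d) = real (\<Prod>m = 0..<a. d - m) / real d ^ a"
    using eventually_ge_at_top[of "a + 1"]
  proof eventually_elim
    case (elim d)
    then have "(\<Prod>m = 0..<a. 1 - real m / real d) = (\<Prod>m = 0..<a. real (d - m) / real d)"
      by (intro prod.cong refl) (auto simp: field_simps)
    then show ?case by (simp add: prod_dividef)
  qed
  ultimately show ?thesis by (simp add: tendsto_cong)
qed

lemma tendsto_inverse_power_sequentially:
  "(\<lambda>d. (1 / real d) ^ n) \<longlonglongrightarrow> (if n = 0 then 1 else 0)"
  using tendsto_power[OF lim_1_over_n, of n] by (simp add: power_0_left)

lemma tendsto_partition_pair_term: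
  assumes "a + b \<le> J + 1"
  shows "(\<lambda>d. 1 / real d * (real (\<Prod>m = 0..<a. d - m) * real (\<Prod>m = 0..<b. d - m) * (1 / real d) ^ J))
    \<longlonglongrightarrow> (if a + b = J + 1 then 1 else 0)"
proof -
  define n where "n = J + 1 - (a + b)"
  let ?ratio = "\<lambda>a d. real (\<Prod>m = 0..<a. d - m) / real d ^ a"
  have "\<forall>\<^sub>F d in sequentially. ?ratio a d * ?ratio b d * (1 / real d) ^ n
      = 1 / real d * (real (\<Prod>m = 0..<a. d - m) * real (\<Prod>m = 0..<b. d - m) * (1 / real d) ^ J)"
    using eventually_gt_at_top[of 0]
  proof eventually_elim
    case (elim d)
    have "J + 1 = n + a + b" using assms unfolding n_def by simp
    then have "1 / real d * (1 / real d) ^ J = (1 / real d) ^ n / real d ^ a / real d ^ b"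
      by (simp add: power_add field_simps flip: power_Suc)
    then show ?case by (simp add: field_simps)
  qed
  moreover have "(\<lambda>d. ?ratio a d * ?ratio b d * (1 / real d) ^ n) \<longlonglongrightarrow> 1 * 1 * (if n = 0 then 1 else 0)"
    by (intro tendsto_mult tendsto_falling_factorial_over_power tendsto_inverse_power_sequentially)
  moreover have "n = 0 \<longleftrightarrow> a + b = J + 1" using assms unfolding n_def by linarith
  ultimately show ?thesis by (simp add: tendsto_cong)
qed

lemma tendsto_joint_partition_term:
  assumes "k \<ge> 1" "p1 \<in> set_partitions k" "p2 \<in> set_partitions k"
  shows "(\<lambda>d. 1 / real d * (real (\<Prod>m = 0..<card p1. d - m) * real (\<Prod>m = 0..<card p2. d - m) *
      (1 / real d) ^ card (joint_partition k p1 p2)))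
    \<longlonglongrightarrow> (if int (card p1) + int (card p2) - int (card (joint_partition k p1 p2)) = 1 then 1 else 0)"
proof -
  have bound: "card p1 + card p2 \<le> card (joint_partition k p1 p2) + 1"
    using card_partitions_le_card_joint_partition[OF assms] .
  then have "int (card p1) + int (card p2) - int (card (joint_partition k p1 p2)) = 1
      \<longleftrightarrow> card p1 + card p2 = card (joint_partition k p1 p2) + 1"
    by linarith
  with tendsto_partition_pair_term[OF bound] show ?thesis
    by simp
qed

lemma sum_sum_indicator_eq_card:
  assumes "finite P"
  shows "(\<Sum>x\<in>P. \<Sum>y\<in>P. if Q x y then 1 else 0) = real (card {(x, y). x \<in> P \<and> y \<in> P \<and> Q x y})"
proof -
  have "(\<Sum>x\<in>P. \<Sum>y\<in>P. if Q x y then 1 else 0) = (\<Sum>(x, y) \<in> P \<times> P. if Q x y then 1 else (0::real))"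
    by (rule sum.cartesian_product)
  also have "\<dots> = real (card {q \<in> P \<times> P. case q of (x, y) \<Rightarrow> Q x y})"
    using assms by (simp add: sum.inter_filter[symmetric] case_prod_unfold if_distrib)
  also have "{q \<in> P \<times> P. case q of (x, y) \<Rightarrow> Q x y} = {(x, y). x \<in> P \<and> y \<in> P \<and> Q x y}"
    by auto
  finally show ?thesis .
qed

theorem proposition1:
  fixes k :: nat
  assumes "k \<ge> 1"
  shows "(\<lambda>d. (1 / real d) *
            measure_pmf.expectation (bernoulli_matrix_pmf d)
              (\<lambda>M. mat_trace ((to_matrix d M * (to_matrix d M)\<^sup>T) ^\<^sub>m k)))
         \<longlonglongrightarrow> real (card {(p1, p2). p1 \<in> set_partitions k \<and> p2 \<in> set_partitions k \<and>
                 int (card p1) + int (card p2) - int (card (joint_partition k p1 p2)) = 1})"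
proof -
  have "finite (set_partitions k)"
    unfolding set_partitions_def by (simp add: finitely_many_partition_on)
  have "(\<lambda>d. (1 / real d) * measure_pmf.expectation (bernoulli_matrix_pmf d)
              (\<lambda>M. mat_trace ((to_matrix d M * (to_matrix d M)\<^sup>T) ^\<^sub>m k)))
      \<longlonglongrightarrow> (\<Sum>p1 \<in> set_partitions k. \<Sum>p2 \<in> set_partitions k.
            if int (card p1) + int (card p2) - int (card (joint_partition k p1 p2)) = 1 then 1 else 0)"
    unfolding expectation_trace_pow_eq_sum_partitions[OF assms] sum_distrib_left
    by (intro tendsto_sum tendsto_joint_partition_term[OF assms])
  then show ?thesis
    unfolding sum_sum_indicator_eq_card[OF \<open>finite (set_partitions k)\<close>] .
qed

end
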